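(* Let $A[0\ldots n-1]$, $B[0\ldots m-1]$ be sequences over a totally ordered alphabet. The sparse-DAG algorithm described in the context returns $\operatorname{LCBS}(A,B)$, the length of a longest common bitonic subsequence of $A$ and $B$.
   Context: A common subsequence of $A$ and $B$ is given by index pairs $(i_1,j_1),\dots,(i_\ell,j_\ell)$ with $i_1<\dots<i_\ell$, $j_1<\dots<j_\ell$ and $A[i_k]=B[j_k]$; it is bitonic if there is $h\in\{1,\dots,\ell\}$ with $A[i_1]<\dots<A[i_h]$ and $A[i_h]>\dots>A[i_\ell]$. $\operatorname{LCBS}(A,B)$ is the maximum length of a bitonic common subsequence ($0$ if there is none). Sparse-DAG algorithm: let $V=\{(i,j)\mid A[i]=B[j]\}$, sorted lexicographically by $(i$ ascending, $j$ ascending$)$. For $v=(i,j)\in V$ let $r_J(v)$ be $1$ plus the rank of $j$ among the distinct column indices in $V$, $r_V(v)$ the rank (from $1$) of $A[i]$ among the sorted distinct values of $A\cup B$, and $MAX_J=\max_v r_J(v)$. A 2-D range structure stores points with keys $(x,y)$ and values, supports $\textsc{Query}(a,b)$ = maximum value of stored points with $x\le a$, $y\le b$ ($0$ if none), and $\textsc{Update}((x,y),val)$. Forward pass (empty structure): for $v$ in sorted order, $INC[v]\gets\textsc{Query}(r_J(v)-1,r_V(v)-1)+1$, then $\textsc{Update}((r_J(v),r_V(v)),INC[v])$. Backward pass (new empty structure): for $v$ in reverse sorted order, with $\widehat r_J(v)=MAX_J-r_J(v)+1$, $DEC[v]\gets\textsc{Query}(\widehat r_J(v)-1,r_V(v)-1)+1$,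 then $\textsc{Update}((\widehat r_J(v),r_V(v)),DEC[v])$. Output $bestLen=\max\bigl(0,\max_{v\in V}(INC[v]+DEC[v]-1)\bigr)$. *)

theory Defs
  imports Main
begin

text \<open>A bitonic common subsequence, given by index lists is (into A) and js (into B),
  0-indexed. The turning point h is 0-indexed here (h < length is).\<close>
definition is_bcs :: "'a::linorder list \<Rightarrow> 'a list \<Rightarrow> nat list \<Rightarrow> nat list \<Rightarrow> bool" where
  "is_bcs A B is js \<longleftrightarrow>
     length is = length js \<and>
     sorted_wrt (<) is \<and> sorted_wrt (<) js \<and>
     (\<forall>i\<in>set is. i < length A) \<and> (\<forall>j\<in>set js. j < length B) \<and>
     (\<forall>k<length is. A ! (is ! k) = B ! (js ! k)) \<and>
     (\<exists>h<length is.
        (\<forall>k. k < h \<longrightarrow> A ! (is ! k) < A ! (is ! Suc k)) \<and>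
        (\<forall>k. h \<le> k \<and> Suc k < length is \<longrightarrow> A ! (is ! k) > A ! (is ! Suc k)))"

definition LCBS :: "'a::linorder list \<Rightarrow> 'a list \<Rightarrow> nat" where
  "LCBS A B = Max (insert 0 {length is | is js. is_bcs A B is js})"

definition matchV :: "'a list \<Rightarrow> 'a list \<Rightarrow> (nat \<times> nat) list" where
  "matchV A B = [(i, j). i \<leftarrow> [0..<length A], j \<leftarrow> [0..<length B], A ! i = B ! j]"

definition colsV :: "'a list \<Rightarrow> 'a list \<Rightarrow> nat set" where
  "colsV A B = snd ` set (matchV A B)"

definition rJ :: "'a list \<Rightarrow> 'a list \<Rightarrow> nat \<times> nat \<Rightarrow> nat" where
  "rJ A B v = 1 + card {j' \<in> colsV A B. j' \<le> snd v}"

definition rV :: "'a::linorder list \<Rightarrow> 'a list \<Rightarrow> nat \<times> nat \<Rightarrow> nat" where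
  "rV A B v = card {x \<in> set A \<union> set B. x \<le> A ! fst v}"

definition MAXJ :: "'a list \<Rightarrow> 'a list \<Rightarrow> nat" where
  "MAXJ A B = Max (rJ A B ` set (matchV A B))"

text \<open>2-D range structure: the list of stored points ((x,y), val).\<close>
type_synonym rstruct = "((nat \<times> nat) \<times> nat) list"

definition rquery :: "rstruct \<Rightarrow> nat \<Rightarrow> nat \<Rightarrow> nat" where
  "rquery S a b = Max (insert 0 {val. \<exists>x y. ((x, y), val) \<in> set S \<and> x \<le> a \<and> y \<le> b})"

definition rupdate :: "nat \<times> nat \<Rightarrow> nat \<Rightarrow> rstruct \<Rightarrow> rstruct" where
  "rupdate p val S = (p, val) # S"

definition fwd_step :: "'a::linorder list \<Rightarrow> 'a list \<Rightarrow> nat \<times> nat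
    \<Rightarrow> rstruct \<times> (nat \<times> nat \<Rightarrow> nat) \<Rightarrow> rstruct \<times> (nat \<times> nat \<Rightarrow> nat)" where
  "fwd_step A B v st =
     (let S = fst st; inc = snd st;
          k = rquery S (rJ A B v - 1) (rV A B v - 1) + 1
      in (rupdate (rJ A B v, rV A B v) k S, inc(v := k)))"

definition INC :: "'a::linorder list \<Rightarrow> 'a list \<Rightarrow> nat \<times> nat \<Rightarrow> nat" where
  "INC A B = snd (fold (fwd_step A B) (matchV A B) ([], (\<lambda>_. 0)))"

definition bwd_step :: "'a::linorder list \<Rightarrow> 'a list \<Rightarrow> nat \<times> nat
    \<Rightarrow> rstruct \<times> (nat \<times> nat \<Rightarrow> nat) \<Rightarrow> rstruct \<times> (nat \<times> nat \<Rightarrow> nat)" where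
  "bwd_step A B v st =
     (let S = fst st; dec = snd st;
          hr = MAXJ A B - rJ A B v + 1;
          k = rquery S (hr - 1) (rV A B v - 1) + 1
      in (rupdate (hr, rV A B v) k S, dec(v := k)))"

definition DEC :: "'a::linorder list \<Rightarrow> 'a list \<Rightarrow> nat \<times> nat \<Rightarrow> nat" where
  "DEC A B = snd (fold (bwd_step A B) (rev (matchV A B)) ([], (\<lambda>_. 0)))"

definition bestLen :: "'a::linorder list \<Rightarrow> 'a list \<Rightarrow> nat" where
  "bestLen A B = Max (insert 0 ((\<lambda>v. INC A B v + DEC A B v - 1) ` set (matchV A B)))"

end

(* INC v is the length of a longest chain of match points ending at v in which both indices
   and the values strictly increase; DEC v is the length of a longest chain starting at v in
   which the indices increase and the values decrease.  Indeed, the forward sweep visits the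
   match points in lexicographic order, so every possible predecessor of v is already stored
   when v is processed, and the range query with keys (column rank, value rank) selects exactly
   those stored points that may precede v in a chain; the backward sweep is the mirror image.
   A bitonic common subsequence is precisely an increasing chain glued at its peak to a
   decreasing chain, so the largest INC v + DEC v - 1 is LCBS. *)

theory Submission
  imports Defs "HOL-Library.Product_Lexorder"
begin

lemma successively_conj_iff:
  "successively (\<lambda>x y. P x y \<and> Q x y) xs \<longleftrightarrow> successively P xs \<and> successively Q xs"
  by (induction P xs rule: successively.induct) auto

lemma successively_take_drop_iff:
  assumes "h < length xs"
  shows "successively P xs \<longleftrightarrow> successively P (take (Suc h) xs) \<and> successively P (drop h xs)"
proof -
  have "take (Suc h) xs = take h xs @ [xs ! h]" "drop h xs = xs ! h # drop (Suc h) xs"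
    using assms by (simp_all add: take_Suc_conv_app_nth Cons_nth_drop_Suc)
  moreover have "xs = take h xs @ xs ! h # drop (Suc h) xs"
    using assms by (simp add: id_take_nth_drop)
  ultimately show ?thesis
    by (metis successively_append_iff successively_Cons list.sel(1) list.distinct(1))
qed

lemma successively_take_Suc_iff:
  "h < length xs \<Longrightarrow> successively P (take (Suc h) xs) \<longleftrightarrow> (\<forall>k<h. P (xs ! k) (xs ! Suc k))"
  by (auto simp: successively_conv_nth)

lemma successively_drop_iff:
  "successively P (drop h xs) \<longleftrightarrow> (\<forall>k. h \<le> k \<and> Suc k < length xs \<longrightarrow> P (xs ! k) (xs ! Suc k))"
proof -
  have "(\<forall>i. Suc i < length xs - h \<longrightarrow> P (xs ! (h + i)) (xs ! Suc (h + i)))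
      \<longleftrightarrow> (\<forall>k. h \<le> k \<and> Suc k < length xs \<longrightarrow> P (xs ! k) (xs ! Suc k))"
  proof safe
    fix k assume all: "\<forall>i. Suc i < length xs - h \<longrightarrow> P (xs ! (h + i)) (xs ! Suc (h + i))"
      and "h \<le> k" "Suc k < length xs"
    then show "P (xs ! k) (xs ! Suc k)" using all[rule_format, of "k - h"] by simp
  qed auto
  then show ?thesis by (simp add: successively_conv_nth)
qed

lemma sorted_wrt_map_iff_successively:
  fixes f :: "'a \<Rightarrow> 'b::order"
  shows "sorted_wrt (<) (map f xs) \<longleftrightarrow> successively (\<lambda>u v. f u < f v) xs"
proof -
  have "transp (\<lambda>u v. f u < f v)" by (auto intro: transpI less_trans)
  then show ?thesis by (simp add: successively_conv_sorted_wrt sorted_wrt_map)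
qed

lemma sorted_wrt_product:
  fixes xs :: "'a::order list" and ys :: "'b::order list"
  shows "sorted_wrt (<) xs \<Longrightarrow> sorted_wrt (<) ys \<Longrightarrow> sorted_wrt (<) (List.product xs ys)"
  by (induction xs) (auto simp: sorted_wrt_append sorted_wrt_map)

lemma sorted_wrt_less_append_Cons:
  fixes v :: "'a::linorder"
  assumes "sorted_wrt (<) (ys @ v # zs)"
  shows "set ys = {u \<in> set (ys @ v # zs). u < v}" "set zs = {u \<in> set (ys @ v # zs). v < u}"
  using assms by (auto simp: sorted_wrt_append)

lemma card_le_less_card_le_iff:
  fixes a b :: "'a::linorder"
  assumes "finite W" "a \<in> W" "b \<in> W"
  shows "card {x \<in> W. x \<le> a} < card {x \<in> W. x \<le> b} \<longleftrightarrow> a < b"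
proof
  assume "a < b"
  then have "{x \<in> W. x \<le> a} \<subseteq> {x \<in> W. x \<le> b}" "b \<notin> {x \<in> W. x \<le> a}"
    by auto
  then have "{x \<in> W. x \<le> a} \<subset> {x \<in> W. x \<le> b}" using assms(3) by blast
  then show "card {x \<in> W. x \<le> a} < card {x \<in> W. x \<le> b}"
    using assms(1) by (intro psubset_card_mono) auto
next
  assume "card {x \<in> W. x \<le> a} < card {x \<in> W. x \<le> b}"
  moreover have "\<not> a < b \<Longrightarrow> card {x \<in> W. x \<le> b} \<le> card {x \<in> W. x \<le> a}"
    using assms(1) by (intro card_mono) auto
  ultimately show "a < b" by linarith
qed

definition chain_recurrence :: "'v set \<Rightarrow> ('v \<Rightarrow> 'v \<Rightarrow> bool) \<Rightarrow> ('v \<Rightarrow> nat) \<Rightarrow> bool" where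
  "chain_recurrence X R F \<longleftrightarrow> (\<forall>v\<in>X. F v = Max (insert 0 (F ` {u \<in> X. R u v})) + 1)"

lemma chain_recurrence_obtain_chain:
  assumes "chain_recurrence X R F" "finite X" "v \<in> X"
  obtains cs where "cs \<noteq> []" "last cs = v" "set cs \<subseteq> X" "successively R cs" "length cs = F v"
  using assms(3)
proof (induction "F v" arbitrary: v thesis rule: less_induct)
  case less
  let ?P = "{u \<in> X. R u v}"
  have Fv: "F v = Max (insert 0 (F ` ?P)) + 1"
    using assms(1) less.prems(2) unfolding chain_recurrence_def by blast
  show ?case
  proof (cases "?P = {}")
    case True
    then show ?thesis using Fv[unfolded True] less.prems by (intro less.prems(1)[of "[v]"]) auto
  next
    case False
    then have "Max (insert 0 (F ` ?P)) \<in> F ` ?P"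
      using assms(2) by (simp add: max_def)
    then obtain u where u: "u \<in> ?P" "F u = Max (insert 0 (F ` ?P))" by auto
    then obtain cs where cs: "cs \<noteq> []" "last cs = u" "set cs \<subseteq> X" "successively R cs" "length cs = F u"
      using less.hyps[of u] Fv by auto
    show ?thesis
      using cs u Fv less.prems by (intro less.prems(1)[of "cs @ [v]"]) (auto simp: successively_append_iff)
  qed
qed

lemma chain_recurrence_length_le:
  assumes "chain_recurrence X R F" "finite X"
    and "cs \<noteq> []" "set cs \<subseteq> X" "successively R cs"
  shows "length cs \<le> F (last cs)"
  using assms(3-5)
proof (induction cs rule: rev_induct)
  case (snoc v cs)
  have "v \<in> X" using snoc.prems(2) by simp
  then have Fv: "F v = Max (insert 0 (F ` {u \<in> X. R u v})) + 1"
    using assms(1) unfolding chain_recurrence_def by blast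
  show ?case
  proof (cases "cs = []")
    case False
    then have "length cs \<le> F (last cs)" "R (last cs) v"
      using snoc by (auto simp: successively_append_iff)
    moreover have "last cs \<in> X" using False snoc.prems(2) by auto
    moreover have "F (last cs) \<le> Max (insert 0 (F ` {u \<in> X. R u v}))"
      using assms(2) calculation by (intro Max_ge) auto
    ultimately have "length cs \<le> Max (insert 0 (F ` {u \<in> X. R u v}))" by linarith
    then show ?thesis using Fv by simp
  qed (simp add: Fv)
qed simp

definition sweep_step :: "('v \<Rightarrow> nat) \<Rightarrow> ('v \<Rightarrow> nat) \<Rightarrow> 'v
    \<Rightarrow> rstruct \<times> ('v \<Rightarrow> nat) \<Rightarrow> rstruct \<times> ('v \<Rightarrow> nat)" where
  "sweep_step kx ky v st =
     (let k = rquery (fst st) (kx v - 1) (ky v - 1) + 1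
      in (rupdate (kx v, ky v) k (fst st), (snd st)(v := k)))"

lemma fwd_step_eq_sweep_step: "fwd_step A B = sweep_step (rJ A B) (rV A B)"
  by (simp add: fun_eq_iff fwd_step_def sweep_step_def Let_def)

lemma bwd_step_eq_sweep_step:
  "bwd_step A B = sweep_step (\<lambda>v. MAXJ A B - rJ A B v + 1) (rV A B)"
  by (simp add: fun_eq_iff bwd_step_def sweep_step_def Let_def)

lemma snd_fold_sweep_step_notin:
  "v \<notin> set xs \<Longrightarrow> snd (fold (sweep_step kx ky) xs st) v = snd st v"
  by (induction xs arbitrary: st) (auto simp: sweep_step_def Let_def)

lemma fst_fold_sweep_step:
  assumes "distinct xs"
  shows "fst (fold (sweep_step kx ky) xs st) =
    map (\<lambda>v. ((kx v, ky v), snd (fold (sweep_step kx ky) xs st) v)) (rev xs) @ fst st"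
  using assms
proof (induction xs rule: rev_induct)
  case (snoc x xs)
  define st' where "st' = fold (sweep_step kx ky) xs st"
  have "x \<notin> set xs" using snoc.prems by simp
  then have "map (\<lambda>v. ((kx v, ky v), ((snd st')(x := k)) v)) (rev xs)
      = map (\<lambda>v. ((kx v, ky v), snd st' v)) (rev xs)" for k
    by (intro map_cong) auto
  then show ?case using snoc by (simp add: st'_def[symmetric] sweep_step_def Let_def rupdate_def)
qed simp

lemma fold_sweep_step_value:
  fixes f0 :: "'v \<Rightarrow> nat"
  assumes "distinct (ys @ x # zs)" "0 < kx x" "0 < ky x"
  defines "F \<equiv> snd (fold (sweep_step kx ky) (ys @ x # zs) ([], f0))"
  shows "F x = Max (insert 0 (F ` {v \<in> set ys. kx v < kx x \<and> ky v < ky x})) + 1"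
proof -
  define st where "st = fold (sweep_step kx ky) ys ([], f0)"
  have F: "F = snd (fold (sweep_step kx ky) zs (sweep_step kx ky x st))"
    by (simp add: F_def st_def)
  have "F x = rquery (fst st) (kx x - 1) (ky x - 1) + 1"
    using assms(1) snd_fold_sweep_step_notin[of x zs] by (simp add: F sweep_step_def Let_def)
  moreover have "F v = snd st v" if "v \<in> set ys" for v
  proof -
    have "v \<notin> set zs" "v \<noteq> x" using assms(1) that by auto
    then show ?thesis by (simp add: F sweep_step_def Let_def snd_fold_sweep_step_notin)
  qed
  moreover have "fst st = map (\<lambda>v. ((kx v, ky v), snd st v)) (rev ys)"
    using fst_fold_sweep_step[of ys kx ky "([], f0)"] assms(1) by (simp add: st_def)
  \<comment> \<open>for positive keys the query bounds \<open>kx x - 1\<close>, \<open>ky x - 1\<close> are the strict bounds \<open>kx x\<close>, \<open>ky x\<close>\<close>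
  ultimately have "{k. \<exists>a b. ((a, b), k) \<in> set (fst st) \<and> a \<le> kx x - 1 \<and> b \<le> ky x - 1}
      = F ` {v \<in> set ys. kx v < kx x \<and> ky v < ky x}"
    using assms(2,3) by force
  with \<open>F x = _\<close> show ?thesis by (simp add: rquery_def)
qed

lemma chain_recurrence_fold_sweep_step:
  fixes f0 :: "'v \<Rightarrow> nat"
  assumes "distinct xs"
    and "\<And>v. v \<in> set xs \<Longrightarrow> 0 < kx v \<and> 0 < ky v"
    and "\<And>ys v zs. xs = ys @ v # zs \<Longrightarrow>
           {u \<in> set ys. kx u < kx v \<and> ky u < ky v} = {u \<in> set xs. R u v}"
  shows "chain_recurrence (set xs) R (snd (fold (sweep_step kx ky) xs ([], f0)))"
  unfolding chain_recurrence_def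
proof
  fix v assume "v \<in> set xs"
  then obtain ys zs where xs: "xs = ys @ v # zs" by (meson split_list)
  have "0 < kx v" "0 < ky v" using assms(2) \<open>v \<in> set xs\<close> by auto
  from fold_sweep_step_value[of ys v zs kx ky f0] assms(1) this
  show "snd (fold (sweep_step kx ky) xs ([], f0)) v =
      Max (insert 0 (snd (fold (sweep_step kx ky) xs ([], f0)) ` {u \<in> set xs. R u v})) + 1"
    unfolding assms(3)[OF xs] xs by simp
qed

lemma matchV_eq_filter_product:
  "matchV A B = filter (\<lambda>(i, j). A ! i = B ! j) (List.product [0..<length A] [0..<length B])"
proof -
  have row: "concat (map (\<lambda>j. if P j then [(i, j)] else []) js) = map (Pair i) (filter P js)"
    for P :: "nat \<Rightarrow> bool" and i :: nat and js
    by (induction js) auto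
  have "concat (map (\<lambda>i. concat (map (\<lambda>j. if P i j then [(i, j)] else []) js)) is)
      = filter (\<lambda>(i, j). P i j) (List.product is js)" for P :: "nat \<Rightarrow> nat \<Rightarrow> bool" and "is" js
    by (induction "is") (simp_all add: row filter_map comp_def)
  from this[of "\<lambda>i j. A ! i = B ! j"] show ?thesis unfolding matchV_def by simp
qed

lemma sorted_wrt_matchV: "sorted_wrt (<) (matchV A B)"
  unfolding matchV_eq_filter_product by (intro sorted_wrt_filter sorted_wrt_product) simp_all

lemma distinct_matchV: "distinct (matchV A B)"
  using sorted_wrt_matchV strict_sorted_iff by blast

lemma set_matchV: "set (matchV A B) = {(i, j). i < length A \<and> j < length B \<and> A ! i = B ! j}"
  by (auto simp: matchV_eq_filter_product)

lemma rJ_less_rJ_iff: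
  assumes "u \<in> set (matchV A B)" "v \<in> set (matchV A B)"
  shows "rJ A B u < rJ A B v \<longleftrightarrow> snd u < snd v"
proof -
  have "finite (colsV A B)" "snd u \<in> colsV A B" "snd v \<in> colsV A B"
    using assms by (auto simp: colsV_def)
  from card_le_less_card_le_iff[OF this] show ?thesis by (simp add: rJ_def)
qed

lemma rV_less_rV_iff:
  assumes "u \<in> set (matchV A B)" "v \<in> set (matchV A B)"
  shows "rV A B u < rV A B v \<longleftrightarrow> A ! fst u < A ! fst v"
proof -
  have "A ! fst u \<in> set A \<union> set B" "A ! fst v \<in> set A \<union> set B"
    using assms by (auto simp: set_matchV)
  from card_le_less_card_le_iff[OF _ this] show ?thesis by (simp add: rV_def)
qed

lemma rV_pos:
  assumes "v \<in> set (matchV A B)"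
  shows "0 < rV A B v"
proof -
  have "A ! fst v \<in> {x \<in> set A \<union> set B. x \<le> A ! fst v}"
    using assms by (auto simp: set_matchV)
  then show ?thesis unfolding rV_def by (auto simp: card_gt_0_iff)
qed

lemma rJ_le_MAXJ: "v \<in> set (matchV A B) \<Longrightarrow> rJ A B v \<le> MAXJ A B"
  unfolding MAXJ_def by (rule Max_ge) auto

definition inc_step :: "'a::linorder list \<Rightarrow> nat \<times> nat \<Rightarrow> nat \<times> nat \<Rightarrow> bool" where
  "inc_step A u v \<longleftrightarrow> fst u < fst v \<and> snd u < snd v \<and> A ! fst u < A ! fst v"

definition dec_step :: "'a::linorder list \<Rightarrow> nat \<times> nat \<Rightarrow> nat \<times> nat \<Rightarrow> bool" where
  "dec_step A u v \<longleftrightarrow> fst u < fst v \<and> snd u < snd v \<and> A ! fst u > A ! fst v"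

lemma chain_recurrence_INC: "chain_recurrence (set (matchV A B)) (inc_step A) (INC A B)"
  unfolding INC_def fwd_step_eq_sweep_step
proof (rule chain_recurrence_fold_sweep_step)
  fix ys v zs assume "matchV A B = ys @ v # zs"
  then have ys: "set ys = {u \<in> set (matchV A B). u < v}" and v: "v \<in> set (matchV A B)"
    using sorted_wrt_less_append_Cons(1)[of ys v zs] sorted_wrt_matchV[of A B] by auto
  have "u < v \<and> rJ A B u < rJ A B v \<and> rV A B u < rV A B v \<longleftrightarrow> inc_step A u v"
    if "u \<in> set (matchV A B)" for u
    \<comment> \<open>equal rows carry equal values, so lexicographic precedence with a larger value forces a larger row\<close>
    unfolding rJ_less_rJ_iff[OF that v] rV_less_rV_iff[OF that v]
    by (auto simp: less_prod_def' inc_step_def)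
  then show "{u \<in> set ys. rJ A B u < rJ A B v \<and> rV A B u < rV A B v} =
      {u \<in> set (matchV A B). inc_step A u v}"
    unfolding ys by blast
qed (auto simp: distinct_matchV rJ_def rV_pos)

lemma chain_recurrence_DEC: "chain_recurrence (set (matchV A B)) (\<lambda>u v. dec_step A v u) (DEC A B)"
proof -
  let ?hr = "\<lambda>v. MAXJ A B - rJ A B v + 1"
  have "chain_recurrence (set (rev (matchV A B))) (\<lambda>u v. dec_step A v u)
      (snd (fold (sweep_step ?hr (rV A B)) (rev (matchV A B)) ([], \<lambda>_. 0)))"
  proof (rule chain_recurrence_fold_sweep_step)
    fix ys v zs assume "rev (matchV A B) = ys @ v # zs"
    then have "matchV A B = rev zs @ v # rev ys" by (simp add: rev_swap)
    then have ys: "set ys = {u \<in> set (matchV A B). v < u}" and v: "v \<in> set (matchV A B)"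
      using sorted_wrt_less_append_Cons(2)[of "rev zs" v "rev ys"] sorted_wrt_matchV[of A B] by auto
    have "v < u \<and> ?hr u < ?hr v \<and> rV A B u < rV A B v \<longleftrightarrow> dec_step A v u"
      if "u \<in> set (matchV A B)" for u
    proof -
      have "?hr u < ?hr v \<longleftrightarrow> snd v < snd u"
        using rJ_le_MAXJ[OF that] rJ_le_MAXJ[OF v] rJ_less_rJ_iff[OF v that] by linarith
      then show ?thesis
        unfolding rV_less_rV_iff[OF that v] by (auto simp: less_prod_def' dec_step_def)
    qed
    then show "{u \<in> set ys. ?hr u < ?hr v \<and> rV A B u < rV A B v} =
        {u \<in> set (rev (matchV A B)). dec_step A v u}"
      unfolding ys set_rev by blast
  qed (auto simp: distinct_matchV rV_pos)
  then show ?thesis by (simp add: DEC_def bwd_step_eq_sweep_step)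
qed

lemma is_bcs_map_iff:
  "is_bcs A B (map fst cs) (map snd cs) \<longleftrightarrow>
     sorted_wrt (<) (map fst cs) \<and> sorted_wrt (<) (map snd cs) \<and> set cs \<subseteq> set (matchV A B) \<and>
     (\<exists>h<length cs. successively (\<lambda>u v. A ! fst u < A ! fst v) (take (Suc h) cs) \<and>
                    successively (\<lambda>u v. A ! fst u > A ! fst v) (drop h cs))"
    (is "_ \<longleftrightarrow> ?sorted_i \<and> ?sorted_j \<and> ?matches \<and> ?bitonic")
proof -
  have "(\<forall>k<length (map fst cs). A ! (map fst cs ! k) = B ! (map snd cs ! k))
      \<longleftrightarrow> (\<forall>u\<in>set cs. A ! fst u = B ! snd u)"
    by (simp add: all_set_conv_all_nth)
  \<comment> \<open>the extra conjunct \<open>E\<close> lets this rewrite inside the right-nested conjunction of \<open>is_bcs_def\<close>\<close>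
  then have matches: "(\<forall>i\<in>set (map fst cs). i < length A) \<and> (\<forall>j\<in>set (map snd cs). j < length B) \<and>
      (\<forall>k<length (map fst cs). A ! (map fst cs ! k) = B ! (map snd cs ! k)) \<and> E \<longleftrightarrow> ?matches \<and> E"
    for E
    by (auto simp: set_matchV)
  have "(\<forall>k<h. A ! (map fst cs ! k) < A ! (map fst cs ! Suc k)) \<and>
      (\<forall>k. h \<le> k \<and> Suc k < length (map fst cs) \<longrightarrow> A ! (map fst cs ! k) > A ! (map fst cs ! Suc k))
      \<longleftrightarrow> successively (\<lambda>u v. A ! fst u < A ! fst v) (take (Suc h) cs) \<and>
          successively (\<lambda>u v. A ! fst u > A ! fst v) (drop h cs)" if "h < length cs" for h
    using that by (simp add: successively_take_Suc_iff successively_drop_iff)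
  then have bitonic: "(\<exists>h<length (map fst cs). (\<forall>k<h. A ! (map fst cs ! k) < A ! (map fst cs ! Suc k)) \<and>
      (\<forall>k. h \<le> k \<and> Suc k < length (map fst cs) \<longrightarrow> A ! (map fst cs ! k) > A ! (map fst cs ! Suc k)))
      \<longleftrightarrow> ?bitonic"
    unfolding length_map by blast
  show ?thesis
    unfolding is_bcs_def bitonic matches by simp
qed

lemma successively_inc_step_iff:
  "successively (inc_step A) xs \<longleftrightarrow> successively (\<lambda>u v. fst u < fst v) xs \<and>
     successively (\<lambda>u v. snd u < snd v) xs \<and> successively (\<lambda>u v. A ! fst u < A ! fst v) xs"
proof -
  have "inc_step A = (\<lambda>u v. fst u < fst v \<and> snd u < snd v \<and> A ! fst u < A ! fst v)"
    by (simp add: fun_eq_iff inc_step_def)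
  then show ?thesis by (simp only: successively_conj_iff)
qed

lemma successively_dec_step_iff:
  "successively (dec_step A) xs \<longleftrightarrow> successively (\<lambda>u v. fst u < fst v) xs \<and>
     successively (\<lambda>u v. snd u < snd v) xs \<and> successively (\<lambda>u v. A ! fst u > A ! fst v) xs"
proof -
  have "dec_step A = (\<lambda>u v. fst u < fst v \<and> snd u < snd v \<and> A ! fst u > A ! fst v)"
    by (simp add: fun_eq_iff dec_step_def)
  then show ?thesis by (simp only: successively_conj_iff)
qed

lemma is_bcs_map_iff_chains:
  "is_bcs A B (map fst cs) (map snd cs) \<longleftrightarrow> set cs \<subseteq> set (matchV A B) \<and>
     (\<exists>h<length cs. successively (inc_step A) (take (Suc h) cs) \<and>
                    successively (dec_step A) (drop h cs))"
proof -
  have "sorted_wrt (<) (map fst cs) \<and> sorted_wrt (<) (map snd cs) \<and>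
      successively (\<lambda>u v. A ! fst u < A ! fst v) (take (Suc h) cs) \<and>
      successively (\<lambda>u v. A ! fst u > A ! fst v) (drop h cs) \<longleftrightarrow>
      successively (inc_step A) (take (Suc h) cs) \<and> successively (dec_step A) (drop h cs)"
    if "h < length cs" for h
    unfolding sorted_wrt_map_iff_successively successively_take_drop_iff[OF that]
      successively_inc_step_iff successively_dec_step_iff by blast
  then show ?thesis unfolding is_bcs_map_iff by blast
qed

lemma finite_bcs_lengths: "finite {length is | is js. is_bcs A B is js}"
proof -
  have "length is \<le> length A" if "is_bcs A B is js" for "is" js
  proof -
    have "distinct is" "set is \<subseteq> {..<length A}"
      using that by (auto simp: is_bcs_def strict_sorted_iff)
    then show ?thesis by (metis card_lessThan card_mono distinct_card finite_lessThan)
  qed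
  then have "{length is | is js. is_bcs A B is js} \<subseteq> {..length A}" by auto
  then show ?thesis by (rule finite_subset) simp
qed

lemma INC_DEC_le_LCBS:
  assumes v: "v \<in> set (matchV A B)"
  shows "INC A B v + DEC A B v - 1 \<le> LCBS A B"
proof -
  obtain c where c: "c \<noteq> []" "last c = v" "set c \<subseteq> set (matchV A B)"
      "successively (inc_step A) c" "length c = INC A B v"
    by (rule chain_recurrence_obtain_chain[OF chain_recurrence_INC finite_set v])
  obtain d where d: "d \<noteq> []" "last d = v" "set d \<subseteq> set (matchV A B)"
      "successively (\<lambda>u w. dec_step A w u) d" "length d = DEC A B v"
    by (rule chain_recurrence_obtain_chain[OF chain_recurrence_DEC finite_set v])
  obtain b where b: "c = b @ [v]"
    using c(1,2) by (metis append_butlast_last_id)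
  obtain e where e: "rev d = v # e"
    using d(1,2) by (cases "rev d") (auto simp: last_rev[symmetric])
  define cs where "cs = b @ v # e"
  have "set cs = set c \<union> set (rev d)"
    by (auto simp: cs_def b e)
  then have "set cs \<subseteq> set (matchV A B)"
    using c(3) d(3) by auto
  moreover have "successively (inc_step A) (take (Suc (length b)) cs)"
    using c(4) by (simp add: cs_def b)
  moreover have "successively (dec_step A) (drop (length b) cs)"
    using d(4) by (simp add: cs_def e[symmetric])
  moreover have "length b < length cs"
    by (simp add: cs_def)
  ultimately have "is_bcs A B (map fst cs) (map snd cs)"
    unfolding is_bcs_map_iff_chains by blast
  then have "length (map fst cs) \<le> LCBS A B"
    unfolding LCBS_def using finite_bcs_lengths by (intro Max_ge) blast+
  moreover have "length cs + 1 = length c + length d"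
    using arg_cong[OF e, of length] by (simp add: cs_def b)
  ultimately show ?thesis
    using c(5) d(5) by simp
qed

lemma length_le_bestLen:
  assumes "is_bcs A B is js"
  shows "length is \<le> bestLen A B"
proof -
  define cs where "cs = zip is js"
  have "is = map fst cs" "js = map snd cs"
    using assms by (simp_all add: cs_def is_bcs_def)
  then obtain h where h: "h < length cs" "set cs \<subseteq> set (matchV A B)"
      "successively (inc_step A) (take (Suc h) cs)" "successively (dec_step A) (drop h cs)"
    using assms is_bcs_map_iff_chains by metis
  have v: "cs ! h \<in> set (matchV A B)"
    using h(1,2) by (meson nth_mem subsetD)
  have "length (take (Suc h) cs) \<le> INC A B (last (take (Suc h) cs))"
    using h(1,3) order_trans[OF set_take_subset h(2)]
    by (intro chain_recurrence_length_le[OF chain_recurrence_INC finite_set]) auto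
  moreover have "length (rev (drop h cs)) \<le> DEC A B (last (rev (drop h cs)))"
    using h(1,4) order_trans[OF set_drop_subset h(2)]
    by (intro chain_recurrence_length_le[OF chain_recurrence_DEC finite_set]) auto
  moreover have "INC A B (cs ! h) + DEC A B (cs ! h) - 1 \<le> bestLen A B"
    unfolding bestLen_def using v by (intro Max_ge) auto
  ultimately show ?thesis
    using h(1) \<open>is = map fst cs\<close> by (simp add: take_Suc_conv_app_nth last_rev hd_drop_conv_nth)
qed

theorem mainTheorem7:
  fixes A B :: "'a::linorder list"
  shows "bestLen A B = LCBS A B"
proof (rule antisym)
  show "bestLen A B \<le> LCBS A B"
    unfolding bestLen_def using INC_DEC_le_LCBS by (auto intro!: Max.boundedI)
  show "LCBS A B \<le> bestLen A B"
    unfolding LCBS_def using length_le_bestLen finite_bcs_lengths by (auto intro!: Max.boundedI)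
qed

end
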